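(* Every finite nonempty left-commutative semigroup, i.e. one satisfying $xya=yxa$ for all $x,y,a$, is $K$-thin.
   Context: For a finite nonempty semigroup $S$, the minimal ideal $K(S)$ is the intersection of all nonempty two-sided ideals of $S$. A Rees matrix semigroup $\mathcal{M}(H;I,J;p)$, for sets $I,J$, a group $H$ and a function $p\colon J\times I\to H$, is the set $I\times H\times J$ with product $(i,h,j)(i',h',j')=(i,h\,p(j,i')\,h',j')$. It is known that $K(S)$ is always isomorphic to such a Rees matrix semigroup with $H$ a finite group and $p$ normalized (i.e. $p(j_0,i)=e_H$ and $p(j,i_0)=e_H$ for some fixed $i_0\in I$, $j_0\in J$ and all $i,j$). $S$ is called $K$-thin if $K(S)$ has such a normalized Rees matrix structure with $|I|=1$ or $|J|=1$; equivalently, $K(S)$ is left-simple or right-simple. *)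

theory Defs
  imports Main
begin

text \<open>A finite nonempty semigroup is modelled as a type of class
  semigroup_mult and finite; the semigroup is the whole type (UNIV,
  which is nonempty since HOL types are nonempty).\<close>

definition two_sided_ideal :: "'a::semigroup_mult set \<Rightarrow> bool" where
  "two_sided_ideal I \<longleftrightarrow> I \<noteq> {} \<and> (\<forall>s x. x \<in> I \<longrightarrow> s * x \<in> I \<and> x * s \<in> I)"

definition minimal_ideal :: "'a::semigroup_mult set" where
  "minimal_ideal = \<Inter> {I. two_sided_ideal I}"

definition left_simple :: "'a::semigroup_mult set \<Rightarrow> bool" where
  "left_simple T \<longleftrightarrow> T \<noteq> {} \<and>
     (\<forall>L. L \<subseteq> T \<and> L \<noteq> {} \<and> (\<forall>t\<in>T. \<forall>l\<in>L. t * l \<in> L) \<longrightarrow> L = T)"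

definition right_simple :: "'a::semigroup_mult set \<Rightarrow> bool" where
  "right_simple T \<longleftrightarrow> T \<noteq> {} \<and>
     (\<forall>R. R \<subseteq> T \<and> R \<noteq> {} \<and> (\<forall>t\<in>T. \<forall>r\<in>R. r * t \<in> R) \<longrightarrow> R = T)"

definition K_thin :: "'a::semigroup_mult itself \<Rightarrow> bool" where
  "K_thin (_ :: 'a itself) \<longleftrightarrow>
     left_simple (minimal_ideal :: 'a set) \<or> right_simple (minimal_ideal :: 'a set)"

end

theory Submission
  imports Defs
begin

text \<open>In a left-commutative semigroup every translate \<open>r K\<close> of the minimal ideal \<open>K\<close> is again
  a two-sided ideal, since \<open>s r k = r s k\<close>; hence \<open>K \<subseteq> r K\<close> by minimality. A right ideal
  \<open>R\<close> of \<open>K\<close> containing \<open>r\<close> contains \<open>r K\<close>, so \<open>R = K\<close> and \<open>K\<close> is right-simple.\<close>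

lemma two_sided_ideal_Int:
  assumes "two_sided_ideal I" and "two_sided_ideal J"
  shows "two_sided_ideal (I \<inter> J)"
proof -
  obtain i j where "i \<in> I" "j \<in> J"
    using assms unfolding two_sided_ideal_def by blast
  then have "i * j \<in> I \<inter> J"
    using assms unfolding two_sided_ideal_def by blast
  then show ?thesis
    using assms unfolding two_sided_ideal_def by blast
qed

lemma minimal_ideal_subset: "two_sided_ideal I \<Longrightarrow> minimal_ideal \<subseteq> I"
  unfolding minimal_ideal_def by blast

lemma minimal_ideal_nonempty: "(minimal_ideal :: 'a::{semigroup_mult, finite} set) \<noteq> {}"
proof -
  have "two_sided_ideal (UNIV :: 'a set)"
    by (simp add: two_sided_ideal_def)
  from ex_has_least_nat[where P = two_sided_ideal and m = card, OF this]
  obtain M :: "'a set" where M: "two_sided_ideal M"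
    and M_least: "\<And>I :: 'a set. two_sided_ideal I \<Longrightarrow> card M \<le> card I"
    by blast
  have "M \<subseteq> I" if I: "two_sided_ideal I" for I
  proof -
    have "card M \<le> card (M \<inter> I)"
      using M I by (intro M_least two_sided_ideal_Int)
    then have "M \<inter> I = M"
      by (rule card_seteq[OF finite Int_lower1])
    then show ?thesis by blast
  qed
  then have "M \<subseteq> minimal_ideal"
    unfolding minimal_ideal_def by blast
  moreover have "M \<noteq> {}"
    using M unfolding two_sided_ideal_def by blast
  ultimately show ?thesis by blast
qed

lemma two_sided_ideal_minimal_ideal:
  "two_sided_ideal (minimal_ideal :: 'a::{semigroup_mult, finite} set)"
  unfolding two_sided_ideal_def
proof (intro conjI allI impI)
  show "(minimal_ideal :: 'a set) \<noteq> {}"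
    by (rule minimal_ideal_nonempty)
  fix s x :: 'a
  assume "x \<in> minimal_ideal"
  then show "s * x \<in> minimal_ideal" and "x * s \<in> minimal_ideal"
    unfolding minimal_ideal_def two_sided_ideal_def by blast+
qed

lemma two_sided_ideal_left_translate:
  fixes r :: "'a::semigroup_mult"
  assumes left_comm: "\<And>x y a :: 'a. x * y * a = y * x * a"
    and I: "two_sided_ideal I"
  shows "two_sided_ideal ((*) r ` I)"
  unfolding two_sided_ideal_def
proof (intro conjI allI impI)
  show "(*) r ` I \<noteq> {}"
    using I unfolding two_sided_ideal_def by blast
  fix s x
  assume "x \<in> (*) r ` I"
  then obtain k where k: "k \<in> I" and x: "x = r * k" by blast
  have "s * x = r * (s * k)"
    using left_comm[of s r k] by (simp add: x mult.assoc)
  then show "s * x \<in> (*) r ` I"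
    using I k unfolding two_sided_ideal_def by blast
  have "x * s = r * (k * s)"
    by (simp add: x mult.assoc)
  then show "x * s \<in> (*) r ` I"
    using I k unfolding two_sided_ideal_def by blast
qed

lemma right_simple_minimal_ideal:
  assumes left_comm: "\<And>x y a :: 'a::{semigroup_mult, finite}. x * y * a = y * x * a"
  shows "right_simple (minimal_ideal :: 'a set)"
  unfolding right_simple_def
proof (intro conjI allI impI)
  let ?K = "minimal_ideal :: 'a set"
  show "?K \<noteq> {}"
    by (rule minimal_ideal_nonempty)
  fix R
  assume R: "R \<subseteq> ?K \<and> R \<noteq> {} \<and> (\<forall>t\<in>?K. \<forall>r\<in>R. r * t \<in> R)"
  then obtain r where r: "r \<in> R" by blast
  have "?K \<subseteq> (*) r ` ?K"
    by (intro minimal_ideal_subset two_sided_ideal_left_translate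
        left_comm two_sided_ideal_minimal_ideal)
  also have "\<dots> \<subseteq> R"
    using R r by blast
  finally show "R = ?K"
    using R by blast
qed

theorem proposition7p8:
  assumes "\<forall>x y a :: 'a::{semigroup_mult, finite}. x * y * a = y * x * a"
  shows "K_thin TYPE('a)"
proof -
  have "right_simple (minimal_ideal :: 'a set)"
    by (rule right_simple_minimal_ideal) (use assms in blast)
  then show ?thesis
    unfolding K_thin_def ..
qed

end
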